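(* Let $X$ be a compact metric space with metric $d$, let $f:X\to X$ be continuous, let $Q=\{m_i\}_{i=1}^\infty$ be a strictly increasing sequence of positive integers, and let $\delta>0$. Then the set of all distributional $\delta$-scrambled pairs in the sequence $Q$ is a $G_\delta$ subset of $X\times X$.
   Context: For $x,y\in X$, $t>0$, $n\ge1$, put $\Phi^n_{(xy,Q)}(t)=\frac1n\#\{1\le i\le n: d(f^{m_i}(x),f^{m_i}(y))\le t\}$, $\Phi_{(xy,Q)}(t)=\liminf_{n\to\infty}\Phi^n_{(xy,Q)}(t)$ and $\Phi^\star_{(xy,Q)}(t)=\limsup_{n\to\infty}\Phi^n_{(xy,Q)}(t)$. A pair $(x,y)\in X\times X$ is a distributional $\delta$-scrambled pair in the sequence $Q$ if (1) $\Phi^\star_{(xy,Q)}(t)=1$ for every $t>0$, and (2) $\Phi_{(xy,Q)}(\delta)=0$. *)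

theory Defs
  imports "HOL-Analysis.Analysis"
begin

definition distr_n :: "('a::metric_space \<Rightarrow> 'a) \<Rightarrow> (nat \<Rightarrow> nat) \<Rightarrow> 'a \<Rightarrow> 'a \<Rightarrow> nat \<Rightarrow> real \<Rightarrow> real" where
  "distr_n f m x y n t =
     real (card {i \<in> {1..n}. dist ((f ^^ m i) x) ((f ^^ m i) y) \<le> t}) / real n"

definition distr_lower :: "('a::metric_space \<Rightarrow> 'a) \<Rightarrow> (nat \<Rightarrow> nat) \<Rightarrow> 'a \<Rightarrow> 'a \<Rightarrow> real \<Rightarrow> ereal" where
  "distr_lower f m x y t = liminf (\<lambda>n. ereal (distr_n f m x y n t))"

definition distr_upper :: "('a::metric_space \<Rightarrow> 'a) \<Rightarrow> (nat \<Rightarrow> nat) \<Rightarrow> 'a \<Rightarrow> 'a \<Rightarrow> real \<Rightarrow> ereal" where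
  "distr_upper f m x y t = limsup (\<lambda>n. ereal (distr_n f m x y n t))"

definition distr_scrambled_pair ::
  "('a::metric_space \<Rightarrow> 'a) \<Rightarrow> (nat \<Rightarrow> nat) \<Rightarrow> real \<Rightarrow> 'a \<Rightarrow> 'a \<Rightarrow> bool" where
  "distr_scrambled_pair f m \<delta> x y \<longleftrightarrow>
     (\<forall>t>0. distr_upper f m x y t = 1) \<and> distr_lower f m x y \<delta> = 0"

end

theory Submission
  imports Defs
begin

text \<open>
  For a fixed n, the number of indices i \<le> n with d(f^(m i) x, f^(m i) y) < t is lower
  semicontinuous in (x, y), being a count of open conditions; so is the number of indices with
  distance > \<delta>. Hence "\<Phi>_n(t) with strict inequality exceeds 1 - 1/(k+1)" and
  "\<Phi>_n(\<delta>) < 1/(k+1)" are open conditions on pairs. The scrambled pairs are exactly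
  those satisfying these conditions for infinitely many n, for all k and for all t = 1/(j+1):
  a countable intersection of sets of the form \<Inter>N. \<Union>n\<ge>N. (open set), i.e. a G\<delta> set.
\<close>

lemma openin_card_upclosed:
  assumes "finite I" and "\<And>i. i \<in> I \<Longrightarrow> openin T {p \<in> topspace T. P i p}"
    and "\<And>r s. Q r \<Longrightarrow> r \<le> s \<Longrightarrow> Q s"
  shows "openin T {p \<in> topspace T. Q (card {i \<in> I. P i p})}"
proof -
  have eq: "{p \<in> topspace T. Q (card {i \<in> I. P i p})} =
        (\<Union>J\<in>{J. J \<subseteq> I \<and> Q (card J)}. (\<Inter>i\<in>J. {p \<in> topspace T. P i p}) \<inter> topspace T)"
    (is "?S = ?U")
  proof (intro equalityI subsetI)
    fix p assume "p \<in> ?S"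
    then show "p \<in> ?U"
      by (intro UN_I[of "{i \<in> I. P i p}"]) auto
  next
    fix p assume "p \<in> ?U"
    then obtain J where J: "J \<subseteq> I" "Q (card J)" "p \<in> topspace T" "\<And>i. i \<in> J \<Longrightarrow> P i p"
      by auto
    have "card J \<le> card {i \<in> I. P i p}"
      using J assms(1) by (intro card_mono) auto
    with J show "p \<in> ?S"
      using assms(3) by blast
  qed
  have "openin T ((\<Inter>i\<in>J. {p \<in> topspace T. P i p}) \<inter> topspace T)" if "J \<subseteq> I" for J
    using that assms(1,2) by (intro openin_INT) (auto intro: finite_subset)
  then show ?thesis
    unfolding eq by (intro openin_Union) auto
qed

lemma gdelta_in_Collect_frequently:
  assumes "\<And>n. openin T {p \<in> topspace T. P n p}"
  shows "gdelta_in T {p \<in> topspace T. \<exists>\<^sub>F n in sequentially. P n p}"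
proof -
  have eq: "{p \<in> topspace T. \<exists>\<^sub>F n in sequentially. P n p} =
        \<Inter> (range (\<lambda>N. \<Union>n\<in>{N..}. {p \<in> topspace T. P n p}))"
    by (auto simp: frequently_sequentially)
  have "openin T (\<Union>n\<in>{N..}. {p \<in> topspace T. P n p})" for N
    using assms by blast
  then show ?thesis
    unfolding eq by (intro gdelta_in_Inter) (auto intro: open_imp_gdelta_in)
qed

lemma gdelta_in_Collect_all:
  fixes P :: "'i::countable \<Rightarrow> 'a \<Rightarrow> bool"
  assumes "\<And>k. gdelta_in T {p \<in> topspace T. P k p}"
  shows "gdelta_in T {p \<in> topspace T. \<forall>k. P k p}"
proof -
  have "{p \<in> topspace T. \<forall>k. P k p} = \<Inter> (range (\<lambda>k. {p \<in> topspace T. P k p}))"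
    by auto
  then show ?thesis
    using assms by (auto intro: gdelta_in_Inter)
qed

lemma le_limsup_ereal_iff:
  fixes u :: "nat \<Rightarrow> real"
  shows "ereal c \<le> limsup (\<lambda>n. ereal (u n)) \<longleftrightarrow>
         (\<forall>k. \<exists>\<^sub>F n in sequentially. c - 1 / Suc k < u n)"
proof safe
  fix k assume le: "ereal c \<le> limsup (\<lambda>n. ereal (u n))"
  show "\<exists>\<^sub>F n in sequentially. c - 1 / Suc k < u n"
  proof (rule ccontr)
    assume "\<not> (\<exists>\<^sub>F n in sequentially. c - 1 / Suc k < u n)"
    then have "\<forall>\<^sub>F n in sequentially. ereal (u n) \<le> ereal (c - 1 / Suc k)"
      by (simp add: not_frequently not_less)
    then have "limsup (\<lambda>n. ereal (u n)) \<le> ereal (c - 1 / Suc k)"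
      by (rule Limsup_bounded)
    with le have "ereal c \<le> ereal (c - 1 / Suc k)"
      by (rule order.trans)
    then show False by simp
  qed
next
  assume freq: "\<forall>k. \<exists>\<^sub>F n in sequentially. c - 1 / Suc k < u n"
  show "ereal c \<le> limsup (\<lambda>n. ereal (u n))"
  proof (rule ccontr)
    assume "\<not> ereal c \<le> limsup (\<lambda>n. ereal (u n))"
    then obtain z where z: "limsup (\<lambda>n. ereal (u n)) < ereal z" "z < c"
      using ereal_dense2 by (metis less_ereal.simps(1) not_le)
    then obtain k where k: "inverse (Suc k) < c - z"
      using reals_Archimedean by (metis diff_gt_0_iff_gt)
    have below: "\<forall>\<^sub>F n in sequentially. u n < z"
      using z(1) Limsup_le_iff[THEN iffD1, OF order.refl] by fastforce
    have "\<exists>\<^sub>F n in sequentially. z < u n"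
      using freq[rule_format, of k] by (rule frequently_elim1) (use k in \<open>simp add: inverse_eq_divide\<close>)
    then have "\<exists>\<^sub>F n in sequentially. False"
      by (rule frequently_rev_mp) (use below in \<open>auto elim: eventually_mono\<close>)
    then show False by simp
  qed
qed

lemma liminf_le_ereal_iff:
  fixes u :: "nat \<Rightarrow> real"
  shows "liminf (\<lambda>n. ereal (u n)) \<le> ereal c \<longleftrightarrow>
         (\<forall>k. \<exists>\<^sub>F n in sequentially. u n < c + 1 / Suc k)"
proof -
  have "liminf (\<lambda>n. ereal (u n)) = - limsup (\<lambda>n. ereal (- u n))"
    using ereal_Liminf_uminus[of sequentially "\<lambda>n. ereal (- u n)"] by simp
  moreover have "- c - a < - b \<longleftrightarrow> b < c + a" for a b :: real
    by linarith
  ultimately show ?thesis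
    using le_limsup_ereal_iff[of "- c" "\<lambda>n. - u n"] by (simp add: ereal_uminus_le_reorder)
qed

lemma continuous_on_funpow:
  assumes "continuous_on X f" and "f ` X \<subseteq> X"
  shows "continuous_on X (f ^^ k)"
proof -
  have "continuous_on X (f ^^ k) \<and> (f ^^ k) ` X \<subseteq> X"
  proof (induction k)
    case (Suc k)
    then show ?case
      using assms by (auto simp: image_subset_iff intro: continuous_on_compose2[of X f X "f ^^ k"])
  qed (simp add: continuous_on_id)
  then show ?thesis ..
qed

lemma openin_dist_preimage:
  fixes g :: "'a::metric_space \<Rightarrow> 'b::metric_space"
  assumes "continuous_on X g" and "open V"
  shows "openin (top_of_set (X \<times> X)) {p \<in> X \<times> X. dist (g (fst p)) (g (snd p)) \<in> V}"
proof -
  have "continuous_on (X \<times> X) (\<lambda>p. dist (g (fst p)) (g (snd p)))"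
    using assms(1) by (intro continuous_on_dist continuous_on_compose2[OF assms(1)] continuous_intros) auto
  from continuous_openin_preimage_gen[OF this assms(2)] show ?thesis
    by (simp add: vimage_def Int_def)
qed

text \<open>
  Unlike distr_n, its super-level sets are open in (x, y); the two interleave as t varies.
\<close>
definition distr_n_strict :: "('a::metric_space \<Rightarrow> 'a) \<Rightarrow> (nat \<Rightarrow> nat) \<Rightarrow> 'a \<Rightarrow> 'a \<Rightarrow> nat \<Rightarrow> real \<Rightarrow> real" where
  "distr_n_strict f m x y n t =
     real (card {i \<in> {1..n}. dist ((f ^^ m i) x) ((f ^^ m i) y) < t}) / real n"

lemma distr_n_nonneg: "0 \<le> distr_n f m x y n t"
  by (simp add: distr_n_def)

lemma distr_n_le_1: "distr_n f m x y n t \<le> 1"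
proof -
  have "card {i \<in> {1..n}. dist ((f ^^ m i) x) ((f ^^ m i) y) \<le> t} \<le> card {1..n}"
    by (intro card_mono) auto
  then show ?thesis
    by (cases "n = 0") (auto simp: distr_n_def divide_le_eq)
qed

lemma distr_n_le_distr_n_strict:
  assumes "t < t'"
  shows "distr_n f m x y n t \<le> distr_n_strict f m x y n t'"
proof -
  have "card {i \<in> {1..n}. dist ((f ^^ m i) x) ((f ^^ m i) y) \<le> t}
      \<le> card {i \<in> {1..n}. dist ((f ^^ m i) x) ((f ^^ m i) y) < t'}"
    using assms by (intro card_mono) auto
  then show ?thesis
    unfolding distr_n_def distr_n_strict_def by (intro divide_right_mono) auto
qed

lemma distr_n_strict_le_distr_n:
  assumes "t' \<le> t"
  shows "distr_n_strict f m x y n t' \<le> distr_n f m x y n t"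
proof -
  have "card {i \<in> {1..n}. dist ((f ^^ m i) x) ((f ^^ m i) y) < t'}
      \<le> card {i \<in> {1..n}. dist ((f ^^ m i) x) ((f ^^ m i) y) \<le> t}"
    using assms by (intro card_mono) auto
  then show ?thesis
    unfolding distr_n_def distr_n_strict_def by (intro divide_right_mono) auto
qed

lemma distr_n_eq_complement:
  "distr_n f m x y n t =
     real (n - card {i \<in> {1..n}. t < dist ((f ^^ m i) x) ((f ^^ m i) y)}) / real n"
proof -
  have "card {i \<in> {1..n}. dist ((f ^^ m i) x) ((f ^^ m i) y) \<le> t}
      = card ({1..n} - {i \<in> {1..n}. t < dist ((f ^^ m i) x) ((f ^^ m i) y)})"
    by (intro arg_cong[where f = card]) auto
  also have "\<dots> = n - card {i \<in> {1..n}. t < dist ((f ^^ m i) x) ((f ^^ m i) y)}"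
    by (subst card_Diff_subset) auto
  finally show ?thesis
    by (simp add: distr_n_def)
qed

lemma distr_upper_eq_1_iff:
  "distr_upper f m x y t = 1 \<longleftrightarrow>
     (\<forall>k. \<exists>\<^sub>F n in sequentially. 1 - 1 / Suc k < distr_n f m x y n t)"
proof -
  have "distr_upper f m x y t \<le> 1"
    unfolding distr_upper_def by (rule Limsup_bounded) (simp add: distr_n_le_1)
  then have "distr_upper f m x y t = 1 \<longleftrightarrow> ereal 1 \<le> distr_upper f m x y t"
    by (auto simp: one_ereal_def)
  then show ?thesis
    unfolding distr_upper_def le_limsup_ereal_iff .
qed

lemma distr_lower_eq_0_iff:
  "distr_lower f m x y t = 0 \<longleftrightarrow>
     (\<forall>k. \<exists>\<^sub>F n in sequentially. distr_n f m x y n t < 1 / Suc k)"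
proof -
  have "0 \<le> distr_lower f m x y t"
    unfolding distr_lower_def by (rule Liminf_bounded) (simp add: distr_n_nonneg)
  then have "distr_lower f m x y t = 0 \<longleftrightarrow> distr_lower f m x y t \<le> ereal 0"
    by (auto simp: zero_ereal_def)
  then show ?thesis
    unfolding distr_lower_def liminf_le_ereal_iff by simp
qed

lemma distr_upper_eq_1_for_all_iff:
  "(\<forall>t>0. distr_upper f m x y t = 1) \<longleftrightarrow>
     (\<forall>j k. \<exists>\<^sub>F n in sequentially. 1 - 1 / Suc k < distr_n_strict f m x y n (1 / Suc j))"
  unfolding distr_upper_eq_1_iff
proof safe
  fix j k
  assume "\<forall>t>0. \<forall>k. \<exists>\<^sub>F n in sequentially. 1 - 1 / Suc k < distr_n f m x y n t"
  then have "\<exists>\<^sub>F n in sequentially. 1 - 1 / Suc k < distr_n f m x y n (1 / Suc (Suc j))"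
    by simp
  moreover have "distr_n f m x y n (1 / Suc (Suc j)) \<le> distr_n_strict f m x y n (1 / Suc j)" for n
    by (intro distr_n_le_distr_n_strict) (simp add: frac_less2)
  ultimately show "\<exists>\<^sub>F n in sequentially. 1 - 1 / Suc k < distr_n_strict f m x y n (1 / Suc j)"
    by (auto elim!: frequently_elim1 intro: less_le_trans)
next
  fix t :: real and k
  assume strict: "\<forall>j k. \<exists>\<^sub>F n in sequentially. 1 - 1 / Suc k < distr_n_strict f m x y n (1 / Suc j)"
    and "0 < t"
  then obtain j where "inverse (Suc j) < t"
    using reals_Archimedean by blast
  then have "distr_n_strict f m x y n (1 / Suc j) \<le> distr_n f m x y n t" for n
    by (intro distr_n_strict_le_distr_n) (simp add: inverse_eq_divide)
  moreover have "\<exists>\<^sub>F n in sequentially. 1 - 1 / Suc k < distr_n_strict f m x y n (1 / Suc j)"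
    using strict by blast
  ultimately show "\<exists>\<^sub>F n in sequentially. 1 - 1 / Suc k < distr_n f m x y n t"
    by (auto elim!: frequently_elim1 intro: less_le_trans)
qed

lemma gdelta_in_distr_scrambled_pairs:
  fixes f :: "'a::metric_space \<Rightarrow> 'a"
  assumes "continuous_on X f" and "f ` X \<subseteq> X"
  shows "gdelta_in (top_of_set (X \<times> X)) {(x, y) \<in> X \<times> X. distr_scrambled_pair f m \<delta> x y}"
proof -
  let ?T = "top_of_set (X \<times> X)"
  let ?d = "\<lambda>i p. dist ((f ^^ m i) (fst p)) ((f ^^ m i) (snd p))"
  have open_dist: "openin ?T {p \<in> topspace ?T. ?d i p \<in> V}" if "open V" for i V
    using openin_dist_preimage[OF continuous_on_funpow[OF assms] that] by simp
  have open_strict: "openin ?T {p \<in> topspace ?T. c < distr_n_strict f m (fst p) (snd p) n t}" for c n t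
    unfolding distr_n_strict_def
    using open_dist[of "{..<t}"]
    by (intro openin_card_upclosed[where P = "\<lambda>i p. ?d i p < t"])
       (auto elim!: less_le_trans intro!: divide_right_mono)
  have open_sparse: "openin ?T {p \<in> topspace ?T. distr_n f m (fst p) (snd p) n \<delta> < \<epsilon>}" for n \<epsilon>
    unfolding distr_n_eq_complement
    using open_dist[of "{\<delta><..}"]
    by (intro openin_card_upclosed[where P = "\<lambda>i p. \<delta> < ?d i p"])
       (auto elim!: le_less_trans[rotated] intro!: divide_right_mono)
  have "{(x, y) \<in> X \<times> X. distr_scrambled_pair f m \<delta> x y} =
      {p \<in> topspace ?T. \<forall>j k. \<exists>\<^sub>F n in sequentially.
         1 - 1 / Suc k < distr_n_strict f m (fst p) (snd p) n (1 / Suc j)} \<inter>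
      {p \<in> topspace ?T. \<forall>k. \<exists>\<^sub>F n in sequentially. distr_n f m (fst p) (snd p) n \<delta> < 1 / Suc k}"
    by (auto simp: distr_scrambled_pair_def distr_upper_eq_1_for_all_iff distr_lower_eq_0_iff)
  also have "gdelta_in ?T \<dots>"
    using open_strict open_sparse
    by (intro gdelta_in_Int gdelta_in_Collect_all gdelta_in_Collect_frequently)
  finally show ?thesis .
qed

theorem proposition2p3:
  fixes X :: "'a::metric_space set" and f :: "'a \<Rightarrow> 'a" and m :: "nat \<Rightarrow> nat" and \<delta> :: real
  assumes "compact X"
    and "continuous_on X f" and "f ` X \<subseteq> X"
    and "strict_mono_on {1..} m" and "\<forall>i\<ge>1. 0 < m i"
    and "\<delta> > 0"
  shows "gdelta_in (prod_topology (top_of_set X) (top_of_set X))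
           {(x, y) \<in> X \<times> X. distr_scrambled_pair f m \<delta> x y}"
  using gdelta_in_distr_scrambled_pairs[OF assms(2,3)] by simp

end
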